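(* Let $t\ge0$ and $i\ge -t$ be integers. Let $\Phi(z)=\sum_{n\ge0}c_nz^n$, where $c_n$ is the number of Deutsch paths of $n$ steps from $(0,0)$ to $(n,i)$ that never go below level $-t$. Let $v=v(z)$ be the power series with $v(0)=0$ satisfying $z=\frac{v}{1+v+v^2}$. Then $$\Phi(z)=\frac{(1+v)^{-i-2}(1-v^{i+t+1})\,v\,(1+v+v^2)}{1-v}\quad\text{for } i<0,$$ $$\Phi(z)=\frac{v^{i}(1-v^{t+2})(1+v+v^2)}{(1-v)(1+v)^{i+2}}\quad\text{for } i\ge0.$$
   Context: A Deutsch path is a lattice path whose steps are up-steps $(1,1)$ and down-steps $(1,-k)$ for any integer $k\ge1$. The series $v$ is given explicitly by $v=\frac{1-z-\sqrt{1-2z-3z^2}}{2z}$. *)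

theory Defs
  imports "HOL-Computational_Algebra.Formal_Power_Series"
begin

text \<open>A Deutsch path of n steps is encoded by its list of vertical displacements:
  each step is an up-step (+1) or a down-step (-k) with k \<ge> 1.\<close>
definition deutsch_step :: "int \<Rightarrow> bool" where
  "deutsch_step s \<longleftrightarrow> s = 1 \<or> s \<le> -1"

definition deutsch_paths :: "int \<Rightarrow> int \<Rightarrow> nat \<Rightarrow> int list set" where
  "deutsch_paths t i n = {ss. length ss = n \<and> (\<forall>s\<in>set ss. deutsch_step s)
      \<and> sum_list ss = i \<and> (\<forall>k\<le>n. sum_list (take k ss) \<ge> -t)}"

definition deutsch_count :: "int \<Rightarrow> int \<Rightarrow> nat \<Rightarrow> nat" where
  "deutsch_count t i n = card (deutsch_paths t i n)"

end

theory Submission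
  imports Defs "HOL-Computational_Algebra.Formal_Laurent_Series"
begin

text \<open>Removing the last step of a path gives c_(n+1)(i) = c_n(i-1) + (sum over h > i of c_n(h)).
Taking differences in i, the counting series Phi_i satisfy, for i \<ge> -t,
  Phi_i - Phi_(i+1) = [i = 0] - [i = -1] + z (Phi_(i-1) - Phi_i + Phi_(i+1)),
together with Phi_(-t-1) = 0 and [z^n] Phi_i = 0 for i > n. These conditions determine the family:
the difference D_i of two solutions satisfies the homogeneous equation, so by induction on n the
coefficients [z^n] D_i are constant for i \<ge> -t - 1, and they vanish for large i.
The closed forms satisfy the same conditions, since after substituting z = v/(1+v+v^2) the equation
becomes an identity between rational functions of v, which is checked in the field of Laurent series.\<close>

lemma sum_list_le_length: "(\<forall>s\<in>set ss. s \<le> (1::int)) \<Longrightarrow> sum_list ss \<le> int (length ss)"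
  by (induction ss) auto

lemma fps_power_mult_nth_eq_0:
  fixes v f :: "'a::comm_semiring_1 fps"
  assumes "v $ 0 = 0" and "n < k"
  shows "(v ^ k * f) $ n = 0"
proof -
  have "v = fps_X * fps_shift 1 v"
    by (rule fps_ext) (simp add: assms(1))
  then have "v ^ k * f = fps_X ^ k * (fps_shift 1 v ^ k * f)"
    by (metis power_mult_distrib mult.assoc)
  then show ?thesis
    using assms(2) by (simp add: fps_X_power_mult_nth)
qed

lemma fps_to_fls_power_int:
  fixes f :: "'a::field fps"
  assumes "f $ 0 \<noteq> 0 \<or> 0 \<le> n"
  shows "fps_to_fls (f powi n) = fps_to_fls f powi n"
  using assms
  by (auto simp: power_int_def fps_to_fls_power power_inverse simp flip: fls_inverse_fps_to_fls)

lemma fps_to_fls_divide: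
  fixes f g :: "'a::field fps"
  assumes "g $ 0 \<noteq> 0"
  shows "fps_to_fls (f / g) = fps_to_fls f / fps_to_fls g"
  using assms
  by (simp add: fps_divide_unit fls_times_fps_to_fls fls_inverse_fps_to_fls divide_inverse)

lemma fps_nth_power_int_0:
  fixes f :: "'a::field fps"
  shows "(f powi n) $ 0 = (f $ 0) powi n"
  by (simp add: power_int_def fps_nth_power_0 fps_inverse_power)

lemma fps_recurrence_system_unique:
  fixes F G c :: "int \<Rightarrow> 'a::comm_ring_1 fps" and t :: int
  assumes boundary: "F (-t - 1) = G (-t - 1)"
    and F_nth: "\<And>i n. int n < i \<Longrightarrow> F i $ n = 0"
    and G_nth: "\<And>i n. int n < i \<Longrightarrow> G i $ n = 0"
    and F_eq: "\<And>i. -t \<le> i \<Longrightarrow> F i - F (i + 1) = c i + fps_X * (F (i - 1) - F i + F (i + 1))"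
    and G_eq: "\<And>i. -t \<le> i \<Longrightarrow> G i - G (i + 1) = c i + fps_X * (G (i - 1) - G i + G (i + 1))"
    and "-t \<le> i"
  shows "F i = G i"
proof -
  define D where "D i = F i - G i" for i
  have D_eq: "D i - D (i + 1) = fps_X * (D (i - 1) - D i + D (i + 1))" if "-t \<le> i" for i
  proof -
    have "D i - D (i + 1) = (F i - F (i + 1)) - (G i - G (i + 1))"
      unfolding D_def by (simp add: algebra_simps)
    also have "\<dots> = fps_X * (D (i - 1) - D i + D (i + 1))"
      unfolding F_eq[OF that] G_eq[OF that] D_def by (simp add: algebra_simps)
    finally show ?thesis .
  qed
  have "D i $ n = 0" if "-t - 1 \<le> i" for i n
    using that
  proof (induction n arbitrary: i rule: less_induct)
    case (less n)
    have same_nth: "D i $ n = D (i + 1) $ n" if "-t \<le> i" for i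
    proof -
      have "(D (i - 1) - D i + D (i + 1)) $ (n - 1) = 0" if "n > 0"
        using less.IH[of "n - 1"] \<open>-t \<le> i\<close> that by simp
      then show ?thesis
        using arg_cong[OF D_eq[OF that], of "\<lambda>f. f $ n"] by (cases "n = 0") auto
    qed
    show ?case
    proof (cases "int n < i")
      case True
      then show ?thesis by (simp add: D_def F_nth G_nth)
    next
      case False
      then have "i \<le> int n + 1" by simp
      then show ?thesis
        using less.prems
      proof (induction i rule: int_le_induct)
        case base
        then show ?case by (simp add: D_def F_nth G_nth)
      next
        case (step i)
        then show ?case
          using same_nth[of "i - 1"] boundary by (cases "i = -t") (auto simp: D_def)
      qed
    qed
  qed
  then show ?thesis
    using assms(6) fps_ext[of "D i" 0] unfolding D_def by auto
qed

lemma deutsch_paths_endpoint_le: "ss \<in> deutsch_paths t i n \<Longrightarrow> i \<le> int n"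
  unfolding deutsch_paths_def deutsch_step_def
  using sum_list_le_length[of ss] by fastforce

lemma deutsch_paths_below: "i < -t \<Longrightarrow> deutsch_paths t i n = {}"
  unfolding deutsch_paths_def by (auto dest!: spec[of _ n])

lemma deutsch_paths_0: "0 \<le> t \<Longrightarrow> deutsch_paths t i 0 = (if i = 0 then {[]} else {})"
  unfolding deutsch_paths_def by auto

lemma snoc_in_deutsch_paths:
  "ys @ [s] \<in> deutsch_paths t i (Suc n)
     \<longleftrightarrow> ys \<in> deutsch_paths t (i - s) n \<and> deutsch_step s \<and> -t \<le> i"
  unfolding deutsch_paths_def
  by (auto simp: le_Suc_eq all_conj_distrib)

lemma deutsch_paths_Suc:
  assumes "-t \<le> i"
  shows "deutsch_paths t i (Suc n)
       = (\<Union>s \<in> insert 1 {i - int n..-1}. (\<lambda>ys. ys @ [s]) ` deutsch_paths t (i - s) n)"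
proof (intro equalityI subsetI)
  fix ss
  assume ss: "ss \<in> deutsch_paths t i (Suc n)"
  then have "ss \<noteq> []"
    by (auto simp: deutsch_paths_def)
  then have ss_eq: "ss = butlast ss @ [last ss]"
    by simp
  then have ys: "butlast ss \<in> deutsch_paths t (i - last ss) n" and "deutsch_step (last ss)"
    using ss snoc_in_deutsch_paths by metis+
  moreover have "i - last ss \<le> int n"
    using ys by (rule deutsch_paths_endpoint_le)
  ultimately have "last ss \<in> insert 1 {i - int n..-1}"
    unfolding deutsch_step_def by auto
  with ys ss_eq show "ss \<in> (\<Union>s \<in> insert 1 {i - int n..-1}. (\<lambda>ys. ys @ [s]) ` deutsch_paths t (i - s) n)"
    by blast
next
  fix ss
  assume "ss \<in> (\<Union>s \<in> insert 1 {i - int n..-1}. (\<lambda>ys. ys @ [s]) ` deutsch_paths t (i - s) n)"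
  then show "ss \<in> deutsch_paths t i (Suc n)"
    using assms by (auto simp: snoc_in_deutsch_paths deutsch_step_def)
qed

lemma finite_deutsch_paths: "0 \<le> t \<Longrightarrow> finite (deutsch_paths t i n)"
proof (induction n arbitrary: i)
  case 0
  then show ?case by (simp add: deutsch_paths_0)
next
  case (Suc n)
  then show ?case
    by (cases "i < -t") (simp_all add: deutsch_paths_below deutsch_paths_Suc)
qed

lemma deutsch_count_0: "0 \<le> t \<Longrightarrow> deutsch_count t i 0 = of_bool (i = 0)"
  by (simp add: deutsch_count_def deutsch_paths_0)

lemma deutsch_count_below: "i < -t \<Longrightarrow> deutsch_count t i n = 0"
  by (simp add: deutsch_count_def deutsch_paths_below)

lemma deutsch_count_above: "int n < i \<Longrightarrow> deutsch_count t i n = 0"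
  unfolding deutsch_count_def by (metis card.empty deutsch_paths_endpoint_le ex_in_conv linorder_not_le)

lemma deutsch_count_Suc:
  assumes "0 \<le> t" and "-t \<le> i"
  shows "deutsch_count t i (Suc n) = deutsch_count t (i - 1) n + (\<Sum>h = i + 1..int n. deutsch_count t h n)"
proof -
  have "deutsch_count t i (Suc n) = (\<Sum>s \<in> insert 1 {i - int n..-1}. card ((\<lambda>ys. ys @ [s]) ` deutsch_paths t (i - s) n))"
    unfolding deutsch_count_def deutsch_paths_Suc[OF assms(2)]
    by (rule card_UN_disjoint) (auto simp: finite_deutsch_paths[OF assms(1)])
  also have "\<dots> = (\<Sum>s \<in> insert 1 {i - int n..-1}. deutsch_count t (i - s) n)"
    by (intro sum.cong refl) (simp add: deutsch_count_def card_image inj_on_def)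
  also have "\<dots> = deutsch_count t (i - 1) n + (\<Sum>s = i - int n..-1. deutsch_count t (i - s) n)"
    by simp
  also have "(\<Sum>s = i - int n..-1. deutsch_count t (i - s) n) = (\<Sum>h = i + 1..int n. deutsch_count t h n)"
    by (rule sum.reindex_bij_witness[of _ "\<lambda>h. i - h" "\<lambda>s. i - s"]) auto
  finally show ?thesis .
qed

definition deutsch_series :: "int \<Rightarrow> int \<Rightarrow> 'a::semiring_1 fps" where
  "deutsch_series t i = Abs_fps (\<lambda>n. of_nat (deutsch_count t i n))"

lemma deutsch_series_equation:
  assumes "0 \<le> t" and "-t \<le> i"
  shows "deutsch_series t i - deutsch_series t (i + 1)
       = of_bool (i = 0) - of_bool (i = -1)
         + fps_X * (deutsch_series t (i - 1) - deutsch_series t i + deutsch_series t (i + 1) :: 'a::comm_ring_1 fps)"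
    (is "?L = ?R")
proof (rule fps_ext)
  fix n
  show "?L $ n = ?R $ n"
  proof (cases n)
    case 0
    then show ?thesis
      using assms(1) by (simp add: deutsch_series_def deutsch_count_0 of_bool_def)
  next
    case (Suc m)
    have "(\<Sum>h = i + 1..int m. deutsch_count t h m)
        = deutsch_count t (i + 1) m + (\<Sum>h = i + 2..int m. deutsch_count t h m)"
    proof (cases "i + 1 \<le> int m")
      case True
      then have "{i + 1..int m} = insert (i + 1) {i + 2..int m}" by auto
      then show ?thesis by simp
    next
      case False
      then show ?thesis by (simp add: deutsch_count_above)
    qed
    then show ?thesis
      using assms Suc by (simp add: deutsch_series_def deutsch_count_Suc add.commute)
  qed
qed

lemma deutsch_series_boundary: "deutsch_series t (-t - 1) = 0"
  by (simp add: deutsch_series_def deutsch_count_below fps_zero_def)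

lemma deutsch_series_nth_eq_0: "int n < i \<Longrightarrow> deutsch_series t i $ n = 0"
  by (simp add: deutsch_series_def deutsch_count_above)

definition deutsch_formula :: "int \<Rightarrow> int \<Rightarrow> 'a::{comm_ring_1,inverse,divide} \<Rightarrow> 'a" where
  "deutsch_formula t i v =
     (if i < 0 then (1 + v) powi (-i - 2) * (1 - v powi (i + t + 1)) * v * (1 + v + v\<^sup>2) / (1 - v)
      else v powi i * (1 - v powi (t + 2)) * (1 + v + v\<^sup>2) / ((1 - v) * (1 + v) powi (i + 2)))"

lemma deutsch_formula_boundary:
  fixes v :: "'a::field fps"
  assumes "0 \<le> t"
  shows "deutsch_formula t (-t - 1) v = 0"
  using assms by (simp add: deutsch_formula_def)

lemma deutsch_formula_field_equation:
  fixes v :: "'a::field"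
  assumes "v \<noteq> 0" "1 + v \<noteq> 0" "1 - v \<noteq> 0" "1 + v + v\<^sup>2 \<noteq> 0"
  shows "deutsch_formula t i v - deutsch_formula t (i + 1) v
       = of_bool (i = 0) - of_bool (i = -1)
         + v / (1 + v + v\<^sup>2) * (deutsch_formula t (i - 1) v - deutsch_formula t i v + deutsch_formula t (i + 1) v)"
proof -
  consider (pos) "1 \<le> i" | (zero) "i = 0" | (minus_one) "i = -1" | (neg) "i \<le> -2" by linarith
  then show ?thesis
  proof cases
    case pos
    then show ?thesis using assms unfolding deutsch_formula_def
      by (simp add: power_int_add power_int_diff power_int_minus divide_simps) algebra
  next
    case zero
    show ?thesis using assms unfolding deutsch_formula_def zero
      by (simp add: power_int_add power_int_diff power_int_minus divide_simps) algebra
  next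
    case minus_one
    show ?thesis using assms unfolding deutsch_formula_def minus_one
      by (simp add: power_int_add power_int_diff power_int_minus divide_simps) algebra
  next
    case neg
    then show ?thesis using assms unfolding deutsch_formula_def
      by (simp add: power_int_add power_int_diff power_int_minus divide_simps) algebra
  qed
qed

text \<open>The hypotheses keep all exponents of v nonnegative: in fps, inverse v is the junk value 0.\<close>

lemma fps_to_fls_deutsch_formula:
  fixes v :: "'a::field fps"
  assumes "v $ 0 = 0" "0 \<le> t" "-t - 1 \<le> i"
  shows "fps_to_fls (deutsch_formula t i v) = deutsch_formula t i (fps_to_fls v)"
  using assms unfolding deutsch_formula_def
  by (simp add: fps_to_fls_divide fps_to_fls_power_int fls_times_fps_to_fls fps_to_fls_power fps_nth_power_int_0)

lemma deutsch_formula_equation: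
  fixes v :: "'a::field fps"
  assumes v0: "v $ 0 = 0" and X: "fps_X = v / (1 + v + v\<^sup>2)" and "0 \<le> t" "-t \<le> i"
  shows "deutsch_formula t i v - deutsch_formula t (i + 1) v
       = of_bool (i = 0) - of_bool (i = -1)
         + fps_X * (deutsch_formula t (i - 1) v - deutsch_formula t i v + deutsch_formula t (i + 1) v)"
proof -
  define V where "V = fps_to_fls v"
  have unit: "(1 + v + v\<^sup>2) $ 0 \<noteq> 0" "(1 + v) $ 0 \<noteq> 0" "(1 - v) $ 0 \<noteq> 0"
    using v0 by (simp_all add: fps_nth_power_0)
  have "v \<noteq> 0" using X by auto
  with unit have "fps_to_fls v \<noteq> 0" "fps_to_fls (1 + v) \<noteq> 0" "fps_to_fls (1 - v) \<noteq> 0"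
      "fps_to_fls (1 + v + v\<^sup>2) \<noteq> 0"
    by (metis fps_to_fls_eq_0_iff fps_nonzeroI)+
  then have nonzero: "V \<noteq> 0" "1 + V \<noteq> 0" "1 - V \<noteq> 0" "1 + V + V\<^sup>2 \<noteq> 0"
    unfolding V_def by (simp_all add: fps_to_fls_power)
  have "fls_X = V / (1 + V + V\<^sup>2)"
    using arg_cong[OF X, of fps_to_fls] unit unfolding V_def by (simp add: fps_to_fls_divide fps_to_fls_power)
  then show ?thesis
    using deutsch_formula_field_equation[OF nonzero, of t i] assms
    by (simp flip: fps_to_fls_eq_iff add: fls_times_fps_to_fls fps_to_fls_deutsch_formula V_def of_bool_def)
qed

lemma deutsch_formula_nth_eq_0:
  fixes v :: "'a::field fps"
  assumes "v $ 0 = 0" and "int n < i"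
  shows "deutsch_formula t i v $ n = 0"
proof -
  have "v powi i = v ^ nat i"
    using assms(2) by (simp add: power_int_def)
  then have "deutsch_formula t i v
      = v ^ nat i * ((1 - v powi (t + 2)) * (1 + v + v\<^sup>2) * inverse ((1 - v) * (1 + v) powi (i + 2)))"
    using assms unfolding deutsch_formula_def by (simp add: fps_divide_unit fps_nth_power_int_0 mult.assoc)
  then show ?thesis
    using assms by (simp add: fps_power_mult_nth_eq_0)
qed

theorem theorem6:
  fixes t i :: int and v Phi :: "real fps"
  assumes "t \<ge> 0" and "i \<ge> -t"
    and "Phi = Abs_fps (\<lambda>n. real (deutsch_count t i n))"
    and "fps_nth v 0 = 0"
    and "fps_X = v / (1 + v + v\<^sup>2)"
  shows "(i < 0 \<longrightarrow> Phi = (1 + v) powi (-i - 2) * (1 - v powi (i + t + 1)) * v * (1 + v + v\<^sup>2)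
                             / (1 - v))
       \<and> (i \<ge> 0 \<longrightarrow> Phi = v powi i * (1 - v powi (t + 2)) * (1 + v + v\<^sup>2)
                             / ((1 - v) * (1 + v) powi (i + 2)))"
proof -
  have "deutsch_series t i = deutsch_formula t i v"
  proof (rule fps_recurrence_system_unique)
    show "deutsch_series t (-t - 1) = deutsch_formula t (-t - 1) v"
      using assms(1) by (simp add: deutsch_series_boundary deutsch_formula_boundary)
    show "deutsch_series t j $ n = 0" if "int n < j" for j n
      using that by (rule deutsch_series_nth_eq_0)
    show "deutsch_formula t j v $ n = 0" if "int n < j" for j n
      using assms(4) that by (rule deutsch_formula_nth_eq_0)
    show "(deutsch_series t j :: real fps) - deutsch_series t (j + 1) = of_bool (j = 0) - of_bool (j = -1)
        + fps_X * (deutsch_series t (j - 1) - deutsch_series t j + deutsch_series t (j + 1))"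
      if "-t \<le> j" for j
      using assms(1) that by (rule deutsch_series_equation)
    show "deutsch_formula t j v - deutsch_formula t (j + 1) v = of_bool (j = 0) - of_bool (j = -1)
        + fps_X * (deutsch_formula t (j - 1) v - deutsch_formula t j v + deutsch_formula t (j + 1) v)"
      if "-t \<le> j" for j
      using assms(4,5,1) that by (rule deutsch_formula_equation)
  qed (fact assms(2))
  then show ?thesis
    using assms(3) unfolding deutsch_series_def deutsch_formula_def by simp
qed

end
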